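(* Let $P$ be a program context and let ${\mathcal{V}}, \mathcal{W}$ be sets of variables such that $P \in \mathcal{E}_{{\mathcal{V}}}$ and $P \in \mathcal{E}_{\mathcal{W}}$ (open evaluation contexts). Then ${\mathcal{V}} = \mathcal{W}$.
   Context: Syntax (split presentation). Terms: $t,u,s ::= x \mid \lambda x.t \mid t\,u$ (ordinary $\lambda$-terms over a countable set of variables). Values: $v,w ::= \lambda x.t$ (variables are not values). Environments: $E ::= \epsilon \mid E[x\leftarrow t]$ (lists of explicit substitutions, ES). Programs: $p ::= (t,E)$. In $E[x\leftarrow t]$ and $(u,E[x\leftarrow t])$ the variable $x$ is bound in $E$ and $u$; everything is up to $\alpha$-renaming, and appended ES are always assumed to bind fresh variables (Barendregt's convention). Appending an ES to a program: $(t,E)@[x\leftarrow u] := (t,E[x\leftarrow u])$. Inert terms and fireballs: $i ::= x \mid i\,f$, $f ::= v \mid i$. Open term evaluation contexts: $\mathcal{H} ::= \langle\cdot\rangle \mid \mathcal{H}\,t \mid i\,\mathcal{H}$ (with $i$ inert). Term contexts in general: $C ::= \langle\cdot\rangle \mid C\,t \mid t\,C$. Environment contexts: $G ::= E[x\leftarrow C] \mid G[x\leftarrow u]$. Program contexts: $P ::= (C,E) \mid (t,G)$. Appending an ES to a program context: $(C,E)@[x\leftarrow u] := (C,E[x\leftarrow u])$, $(t,G)@[x\leftarrow u] := (t,G[x\leftarrow u])$. Plugging a program into a program context: $(C,E)\langle (t,E')\rangle := (C\langle t\rangle, E'E)$; $(u,E[x\leftarrow C])\langle (t,E')\rangle :=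 (u, E[x\leftarrow C\langle t\rangle]E')$; $(u,G[x\leftarrow s])\langle (t,E)\rangle := ((u,G)\langle(t,E)\rangle)@[x\leftarrow s]$. Plugging a term $t$ into $P$ means $P\langle t\rangle := P\langle (t,\epsilon)\rangle$. For a program $p=(t,E)$ and a head context $\mathcal{H}$, $p@[x\leftarrow\mathcal{H}]$ denotes the program context $(t,E[x\leftarrow\mathcal{H}])$. Needed variables: $nv(x)=\{x\}$, $nv(\lambda x.t)=\emptyset$, $nv(t\,u)=nv(t)\cup nv(u)$; $nv((t,\epsilon))=nv(t)$, and $nv((t,E[x\leftarrow u]))=nv((t,E))$ if $x\notin nv((t,E))$, and $=(nv((t,E))\setminus\{x\})\cup nv(u)$ if $x\in nv((t,E))$. For term contexts: $nv(\langle\cdot\rangle)=\emptyset$, $nv(\mathcal{H}\,t)=nv(\mathcal{H})$, $nv(i\,\mathcal{H})=nv(i)\cup nv(\mathcal{H})$. Open evaluation contexts: the relation $P\in\mathcal{E}_{{\mathcal{V}}}$ ($P$ is an open evaluation context with needed variables ${\mathcal{V}}$) is inductively defined by: (ax) $(\mathcal{H},\epsilon)\in\mathcal{E}_{nv(\mathcal{H})}$; (inert) if $P\in\mathcal{E}_{{\mathcal{V}}}$ and $x\in{\mathcal{V}}$ then $P@[x\leftarrow i]\in\mathcal{E}_{({\mathcal{V}}\setminus\{x\})\cup nv(i)}$ for $i$ inert; (gc) if $P\in\mathcal{E}_{{\mathcal{V}}}$ and $x\notin{\mathcal{V}}$ then $P@[x\leftarrow t]\in\mathcal{E}_{{\mathcal{V}}}$;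 (her) if $P\in\mathcal{E}_{{\mathcal{V}}}$ and $x\notin{\mathcal{V}}$ then $P\langle x\rangle@[x\leftarrow\mathcal{H}]\in\mathcal{E}_{{\mathcal{V}}\cup nv(\mathcal{H})}$. In the last three rules $x$ is not in the domain of $P$. *)

theory Defs
  imports Main "HOL-Library.Countable" "HOL-Library.Infinite_Typeclass"
begin

datatype 'v trm = Var 'v | Lam 'v "'v trm" | App "'v trm" "'v trm"

text \<open>Environments: Eps is the empty environment; ES E x t is E[x<-t]
  (the new substitution is appended on the right).\<close>
datatype 'v env = Eps | ES "'v env" 'v "'v trm"

type_synonym 'v prog = "'v trm \<times> 'v env"

fun env_cat :: "'v env \<Rightarrow> 'v env \<Rightarrow> 'v env" where
  "env_cat E' Eps = E'"
| "env_cat E' (ES E x t) = ES (env_cat E' E) x t"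

datatype 'v ctx = Hole | CAppL "'v ctx" "'v trm" | CAppR "'v trm" "'v ctx"

datatype 'v genv = GHole "'v env" 'v "'v ctx" | GES "'v genv" 'v "'v trm"

datatype 'v pctx = PC "'v ctx" "'v env" | PG "'v trm" "'v genv"

fun is_value :: "'v trm \<Rightarrow> bool" where
  "is_value (Lam x t) = True"
| "is_value _ = False"

inductive inert :: "'v trm \<Rightarrow> bool" and fireball :: "'v trm \<Rightarrow> bool" where
  inert_var: "inert (Var x)"
| inert_app: "inert i \<Longrightarrow> fireball f \<Longrightarrow> inert (App i f)"
| fireball_val: "is_value v \<Longrightarrow> fireball v"
| fireball_inert: "inert i \<Longrightarrow> fireball i"

inductive head_ctx :: "'v ctx \<Rightarrow> bool" where
  "head_ctx Hole"
| "head_ctx H \<Longrightarrow> head_ctx (CAppL H t)"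
| "inert i \<Longrightarrow> head_ctx H \<Longrightarrow> head_ctx (CAppR i H)"

fun plug :: "'v ctx \<Rightarrow> 'v trm \<Rightarrow> 'v trm" where
  "plug Hole t = t"
| "plug (CAppL C u) t = App (plug C t) u"
| "plug (CAppR u C) t = App u (plug C t)"

fun prog_app :: "'v prog \<Rightarrow> 'v \<Rightarrow> 'v trm \<Rightarrow> 'v prog" where
  "prog_app (t, E) x u = (t, ES E x u)"

fun pctx_app :: "'v pctx \<Rightarrow> 'v \<Rightarrow> 'v trm \<Rightarrow> 'v pctx" where
  "pctx_app (PC C E) x u = PC C (ES E x u)"
| "pctx_app (PG t G) x u = PG t (GES G x u)"

fun gplug :: "'v trm \<Rightarrow> 'v genv \<Rightarrow> 'v prog \<Rightarrow> 'v prog" where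
  "gplug u (GHole E x C) (t, E') = (u, env_cat (ES E x (plug C t)) E')"
| "gplug u (GES G x s) p = prog_app (gplug u G p) x s"

fun pplug :: "'v pctx \<Rightarrow> 'v prog \<Rightarrow> 'v prog" where
  "pplug (PC C E) (t, E') = (plug C t, env_cat E' E)"
| "pplug (PG u G) p = gplug u G p"

fun prog_app_ctx :: "'v prog \<Rightarrow> 'v \<Rightarrow> 'v ctx \<Rightarrow> 'v pctx" where
  "prog_app_ctx (t, E) x H = PG t (GHole E x H)"

fun env_dom :: "'v env \<Rightarrow> 'v set" where
  "env_dom Eps = {}"
| "env_dom (ES E x t) = insert x (env_dom E)"

fun genv_dom :: "'v genv \<Rightarrow> 'v set" where
  "genv_dom (GHole E x C) = insert x (env_dom E)"
| "genv_dom (GES G x t) = insert x (genv_dom G)"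

fun pctx_dom :: "'v pctx \<Rightarrow> 'v set" where
  "pctx_dom (PC C E) = env_dom E"
| "pctx_dom (PG t G) = genv_dom G"

fun nv :: "'v trm \<Rightarrow> 'v set" where
  "nv (Var x) = {x}"
| "nv (Lam x t) = {}"
| "nv (App t u) = nv t \<union> nv u"

fun nv_prog :: "'v trm \<Rightarrow> 'v env \<Rightarrow> 'v set" where
  "nv_prog t Eps = nv t"
| "nv_prog t (ES E x u) =
     (if x \<notin> nv_prog t E then nv_prog t E else (nv_prog t E - {x}) \<union> nv u)"

text \<open>Needed variables of a head context (nv(hole) = {}, nv(H t) = nv(H),
  nv(i H) = nv(i) \<union> nv(H)); only used on head contexts.\<close>
fun nv_ctx :: "'v ctx \<Rightarrow> 'v set" where
  "nv_ctx Hole = {}"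
| "nv_ctx (CAppL H t) = nv_ctx H"
| "nv_ctx (CAppR i H) = nv i \<union> nv_ctx H"

section \<open>Open evaluation contexts: evctx P V means P \<in> E_V\<close>

inductive evctx :: "'v pctx \<Rightarrow> 'v set \<Rightarrow> bool" where
  ax: "head_ctx H \<Longrightarrow> evctx (PC H Eps) (nv_ctx H)"
| inert: "evctx P V \<Longrightarrow> x \<in> V \<Longrightarrow> x \<notin> pctx_dom P \<Longrightarrow> inert i \<Longrightarrow>
          evctx (pctx_app P x i) ((V - {x}) \<union> nv i)"
| gc: "evctx P V \<Longrightarrow> x \<notin> V \<Longrightarrow> x \<notin> pctx_dom P \<Longrightarrow>
          evctx (pctx_app P x t) V"
| her: "evctx P V \<Longrightarrow> x \<notin> V \<Longrightarrow> x \<notin> pctx_dom P \<Longrightarrow> head_ctx H \<Longrightarrow>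
          evctx (prog_app_ctx (pplug P (Var x, Eps)) x H) (V \<union> nv_ctx H)"

end

theory Submission
  imports Defs
begin

text \<open>Plugging a fresh variable \<open>x\<close> into the hole of \<open>P \<in> \<E>\<^sub>V\<close> yields a program \<open>P\<langle>x\<rangle>\<close>
  from which \<open>P\<close>, \<open>x\<close> and \<open>V\<close> can be read back, by induction on the derivation: \<open>ax\<close> is the
  only rule producing an empty environment, and a last substitution \<open>[z\<leftarrow>u]\<close> that came from
  \<open>her\<close> has the fresh variable needed in \<open>u\<close>, which rules out \<open>inert\<close>, and \<open>z\<close> plugged into
  the rest, which rules out \<open>gc\<close>. The base case is the fact that \<open>H\<langle>x\<rangle>\<close> determines a head
  context \<open>H\<close> and \<open>x\<close> when \<open>x\<close> is not needed by \<open>H\<close>. Reading back \<open>P\<langle>x\<rangle>\<close> along the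
  derivations of \<open>P \<in> \<E>\<^sub>V\<close> and \<open>P \<in> \<E>\<^sub>W\<close> gives \<open>V = W\<close>.\<close>

lemma in_nv_plug_Var: "x \<in> nv (plug C (Var x))"
  by (induction C) auto

lemma finite_nv: "finite (nv t)"
  by (induction t) auto

lemma finite_nv_ctx: "finite (nv_ctx C)"
  by (induction C) (auto simp: finite_nv)

lemma finite_env_dom: "finite (env_dom E)"
  by (induction E) auto

lemma finite_genv_dom: "finite (genv_dom G)"
  by (induction G) (auto simp: finite_env_dom)

lemma finite_pctx_dom: "finite (pctx_dom P)"
  by (cases P) (auto simp: finite_env_dom finite_genv_dom)

lemma evctx_finite: "evctx P V \<Longrightarrow> finite V"
  by (induction rule: evctx.induct) (auto simp: finite_nv finite_nv_ctx)

lemma head_ctx_plug_Var_inj: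
  assumes "head_ctx H" "head_ctx H'" "plug H (Var x) = plug H' (Var y)"
    and "y \<notin> nv_ctx H" "x \<notin> nv_ctx H'"
  shows "H = H' \<and> x = y"
  using assms
proof (induction H arbitrary: H' rule: head_ctx.induct)
  case 1
  then show ?case by (cases H') auto
next
  case (2 H t)
  from \<open>head_ctx H'\<close> show ?case
  proof cases
    case (3 i H2)
    then show ?thesis using "2.prems" in_nv_plug_Var[of x H] by auto
  qed (use 2 in auto)
next
  case (3 i H)
  from \<open>head_ctx H'\<close> show ?case
  proof cases
    case (2 H2 t2)
    then show ?thesis using "3.prems" in_nv_plug_Var[of y H2] by auto
  qed (use 3 in auto)
qed

lemma prog_app_eq_iff: "prog_app p z u = prog_app q w s \<longleftrightarrow> p = q \<and> z = w \<and> u = s"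
  by (cases p, cases q) auto

lemma prog_app_neq_Eps: "prog_app p z u \<noteq> (t, Eps)" "(t, Eps) \<noteq> prog_app p z u"
  by (cases p; simp)+

lemma pplug_pctx_app: "pplug (pctx_app P z u) p = prog_app (pplug P p) z u"
  by (cases P; cases p) auto

lemma pplug_prog_app_ctx: "pplug (prog_app_ctx q w H) (t, Eps) = prog_app q w (plug H t)"
  by (cases q) auto

lemma pctx_dom_pctx_app: "pctx_dom (pctx_app P z u) = insert z (pctx_dom P)"
  by (cases P) auto

lemmas plug_simps = pplug_pctx_app pplug_prog_app_ctx prog_app_eq_iff prog_app_neq_Eps
  pctx_dom_pctx_app

lemma evctx_cases_merged [consumes 1, case_names ax app her]:
  assumes "evctx Q W"
  obtains (ax) H where "Q = PC H Eps" "W = nv_ctx H" "head_ctx H"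
  | (app) P V z u where "Q = pctx_app P z u" "W = (if z \<in> V then V - {z} \<union> nv u else V)"
      "evctx P V" "z \<notin> pctx_dom P" "z \<in> V \<Longrightarrow> inert u"
  | (her) P V w H where "Q = prog_app_ctx (pplug P (Var w, Eps)) w H" "W = V \<union> nv_ctx H"
      "evctx P V" "w \<notin> V" "w \<notin> pctx_dom P" "head_ctx H"
  using assms
proof cases
  case (inert P V x i)
  then show thesis using app[of P x i V] by simp
next
  case (gc P x t)
  then show thesis using app[of P x t W] by simp
qed (use ax her in blast)+

text \<open>The freshness conditions are crossed on purpose: with \<open>x \<notin> V\<close> and \<open>y \<notin> V'\<close> instead,
  \<open>(y \<langle>\<cdot>\<rangle>, \<epsilon>)\<langle>x\<rangle> = (\<langle>\<cdot>\<rangle> x, \<epsilon>)\<langle>y\<rangle>\<close> would be a counterexample.\<close>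
definition unique_plug :: "'v pctx \<Rightarrow> 'v set \<Rightarrow> 'v \<Rightarrow> bool" where
  "unique_plug P V x \<longleftrightarrow>
    (\<forall>P' V' y. evctx P' V' \<longrightarrow> y \<notin> pctx_dom P' \<longrightarrow> y \<notin> V \<longrightarrow> x \<notin> V' \<longrightarrow>
      pplug P (Var x, Eps) = pplug P' (Var y, Eps) \<longrightarrow> P = P' \<and> x = y \<and> V = V')"

lemma unique_plugI:
  assumes "\<And>P' V' y. evctx P' V' \<Longrightarrow> y \<notin> pctx_dom P' \<Longrightarrow> y \<notin> V \<Longrightarrow> x \<notin> V' \<Longrightarrow>
    pplug P (Var x, Eps) = pplug P' (Var y, Eps) \<Longrightarrow> P = P' \<and> x = y \<and> V = V'"
  shows "unique_plug P V x"
  using assms unfolding unique_plug_def by blast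

lemma unique_plugD:
  assumes "unique_plug P V x" "evctx P' V'" "y \<notin> pctx_dom P'" "y \<notin> V" "x \<notin> V'"
    and "pplug P (Var x, Eps) = pplug P' (Var y, Eps)"
  shows "P = P' \<and> x = y \<and> V = V'"
  using assms unfolding unique_plug_def by blast

lemma unique_plug_ax:
  assumes "head_ctx H"
  shows "unique_plug (PC H Eps) (nv_ctx H) x"
proof (rule unique_plugI)
  fix P' V' y
  assume "evctx P' V'" "y \<notin> pctx_dom P'" "y \<notin> nv_ctx H" "x \<notin> V'"
    and plugged: "pplug (PC H Eps) (Var x, Eps) = pplug P' (Var y, Eps)"
  then show "PC H Eps = P' \<and> x = y \<and> nv_ctx H = V'"
  proof (cases rule: evctx_cases_merged)
    case (ax H')
    with plugged have "plug H (Var x) = plug H' (Var y)" by simp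
    then have "H = H' \<and> x = y"
      using head_ctx_plug_Var_inj[OF assms \<open>head_ctx H'\<close>] ax \<open>y \<notin> nv_ctx H\<close> \<open>x \<notin> V'\<close>
      by simp
    with ax show ?thesis by simp
  qed (use plugged in \<open>simp_all add: plug_simps\<close>)
qed

lemma unique_plug_app:
  assumes IH: "unique_plug P V x" and "x \<noteq> z"
  shows "unique_plug (pctx_app P z u) (if z \<in> V then V - {z} \<union> nv u else V) x"
proof (rule unique_plugI)
  fix P' V' y
  assume "evctx P' V'" and y_fresh: "y \<notin> pctx_dom P'" "y \<notin> (if z \<in> V then V - {z} \<union> nv u else V)"
    and "x \<notin> V'" and plugged: "pplug (pctx_app P z u) (Var x, Eps) = pplug P' (Var y, Eps)"
  then show "pctx_app P z u = P' \<and> x = y \<and> (if z \<in> V then V - {z} \<union> nv u else V) = V'"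
  proof (cases rule: evctx_cases_merged)
    case (app P1 V1 z1 u1)
    with plugged have "pplug P (Var x, Eps) = pplug P1 (Var y, Eps)" "z = z1" "u = u1"
      by (simp_all add: plug_simps)
    moreover have "P = P1 \<and> x = y \<and> V = V1"
      using unique_plugD[OF IH \<open>evctx P1 V1\<close>] calculation app y_fresh \<open>x \<noteq> z\<close> \<open>x \<notin> V'\<close>
      by (auto simp: plug_simps split: if_splits)
    ultimately show ?thesis using app by simp
  next
    case (her P1 V1 w H)
    with plugged have eqs: "pplug P (Var x, Eps) = pplug P1 (Var w, Eps)" "z = w" "u = plug H (Var y)"
      by (simp_all add: plug_simps)
    have "z \<notin> V"
      using y_fresh in_nv_plug_Var[of y H] eqs(3) by auto
    then have "x = w"
      using unique_plugD[OF IH \<open>evctx P1 V1\<close>] eqs her \<open>x \<notin> V'\<close> by auto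
    with \<open>x \<noteq> z\<close> \<open>z = w\<close> show ?thesis by simp
  qed (use plugged in \<open>simp_all add: plug_simps\<close>)
qed

lemma unique_plug_her:
  assumes IH: "unique_plug P V w" and "w \<notin> V" "head_ctx H"
  shows "unique_plug (prog_app_ctx (pplug P (Var w, Eps)) w H) (V \<union> nv_ctx H) x"
proof (rule unique_plugI)
  fix P' V' y
  assume "evctx P' V'" "y \<notin> pctx_dom P'" "y \<notin> V \<union> nv_ctx H" "x \<notin> V'"
    and plugged: "pplug (prog_app_ctx (pplug P (Var w, Eps)) w H) (Var x, Eps) = pplug P' (Var y, Eps)"
  then show "prog_app_ctx (pplug P (Var w, Eps)) w H = P' \<and> x = y \<and> V \<union> nv_ctx H = V'"
  proof (cases rule: evctx_cases_merged)
    case (app P1 V1 z1 u1)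
    with plugged have eqs: "pplug P (Var w, Eps) = pplug P1 (Var y, Eps)" "w = z1" "plug H (Var x) = u1"
      by (auto simp: plug_simps)
    have "z1 \<notin> V1"
      using \<open>x \<notin> V'\<close> in_nv_plug_Var[of x H] eqs(3) app by auto
    moreover have "y \<notin> pctx_dom P1"
      using \<open>y \<notin> pctx_dom P'\<close> app by (simp add: plug_simps)
    ultimately have "w = y"
      using unique_plugD[OF IH \<open>evctx P1 V1\<close> _ _ _ eqs(1)] eqs(2) \<open>y \<notin> V \<union> nv_ctx H\<close>
      by blast
    with \<open>y \<notin> pctx_dom P'\<close> \<open>w = z1\<close> app show ?thesis by (simp add: plug_simps)
  next
    case (her P1 V1 w1 H1)
    with plugged have eqs: "pplug P (Var w, Eps) = pplug P1 (Var w1, Eps)" "w = w1"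
      "plug H (Var x) = plug H1 (Var y)"
      by (auto simp: plug_simps)
    have "P = P1 \<and> V = V1"
      using unique_plugD[OF IH \<open>evctx P1 V1\<close>] eqs her \<open>w \<notin> V\<close> by auto
    moreover have "H = H1 \<and> x = y"
      using head_ctx_plug_Var_inj[OF \<open>head_ctx H\<close> _ eqs(3)] her \<open>y \<notin> V \<union> nv_ctx H\<close> \<open>x \<notin> V'\<close>
      by auto
    ultimately show ?thesis using her eqs(2) by simp
  qed (use plugged in \<open>simp_all add: plug_simps\<close>)
qed

lemma evctx_unique_plug: "evctx P V \<Longrightarrow> x \<notin> pctx_dom P \<Longrightarrow> unique_plug P V x"
proof (induction arbitrary: x rule: evctx.induct)
  case (ax H)
  then show ?case by (simp add: unique_plug_ax)
next
  case (inert P V z i)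
  then show ?case using unique_plug_app[of P V x z i] by (simp add: plug_simps)
next
  case (gc P V z t)
  then show ?case using unique_plug_app[of P V x z t] by (simp add: plug_simps)
next
  case (her P V w H)
  then show ?case by (simp add: unique_plug_her)
qed

theorem mainTheorem1:
  fixes P :: "('v :: {countable, infinite}) pctx"
    and V W :: "'v set"
  assumes "evctx P V"
    and "evctx P W"
  shows "V = W"
proof -
  have "finite (V \<union> W \<union> pctx_dom P)"
    using assms by (simp add: evctx_finite finite_pctx_dom)
  then obtain x :: 'v where x: "x \<notin> V \<union> W \<union> pctx_dom P"
    using ex_new_if_finite[OF infinite_UNIV] by metis
  then have "unique_plug P V x"
    using evctx_unique_plug[OF assms(1)] by simp
  from unique_plugD[OF this assms(2)] x show ?thesis
    by blast
qed

end
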